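(* Let $M_\varphi$ be a hyperbolic once-punctured torus bundle with fibre $S$. Then the image of the restriction map $r\colon X(M_\varphi)\to X(S)$ equals $X_\varphi(S)$. Moreover, $X_\varphi(S)$ contains at most finitely many characters of reducible representations.
   Context: $\pi_1(M_\varphi)=\langle t,a,b\mid t^{-1}at=\varphi(a), t^{-1}bt=\varphi(b)\rangle$ with $a,b$ free generators of $\pi_1(S)$, $t$ a meridian, and $\varphi_*\in\mathrm{SL}(2,\mathbb{Z})$ the induced map on $H_1(S)$, satisfying $|\operatorname{tr}\varphi_*|>2$. $X(N)$ denotes the $\mathrm{SL}(2,\mathbb{C})$-character variety. $X(S)\cong\mathbb{C}^3$ via $(\operatorname{tr}\rho(a),\operatorname{tr}\rho(b),\operatorname{tr}\rho(ab))$; $X_\varphi(S)$ is the fixed set of the polynomial automorphism of $X(S)$ induced by $\varphi$ ($\chi\mapsto\chi\circ\varphi$). $r$ is restriction to $\pi_1(S)$. *)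

theory Defs
  imports "HOL-Analysis.Analysis"
begin

type_synonym cmat = "complex^2^2"

text \<open>Generators of the free group pi_1(S) = F(a,b).\<close>
datatype gS = Ga | Gb

text \<open>Generators of pi_1(M_phi): the meridian t and the fibre generators a, b.\<close>
datatype gM = Gt | Fib gS

text \<open>Words in a free group: a letter (g, False) is g, (g, True) is g inverse.\<close>
type_synonym 'g word = "('g \<times> bool) list"

fun push :: "'g \<times> bool \<Rightarrow> 'g word \<Rightarrow> 'g word" where
  "push x [] = [x]"
| "push x (y # ys) = (if fst x = fst y \<and> snd x \<noteq> snd y then ys else x # y # ys)"

definition freduce :: "'g word \<Rightarrow> 'g word" where
  "freduce w = foldr push w []"

definition winv :: "'g word \<Rightarrow> 'g word" where
  "winv w = rev (map (\<lambda>(g, e). (g, \<not> e)) w)"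

definition wsubst :: "('g \<Rightarrow> 'h word) \<Rightarrow> 'g word \<Rightarrow> 'h word" where
  "wsubst f w = concat (map (\<lambda>(g, e). if e then winv (f g) else f g) w)"

definition is_free_aut :: "('g \<Rightarrow> 'g word) \<Rightarrow> bool" where
  "is_free_aut f \<longleftrightarrow> (\<exists>h. \<forall>g. freduce (wsubst h (f g)) = [(g, False)]
                              \<and> freduce (wsubst f (h g)) = [(g, False)])"

definition esum :: "'g \<Rightarrow> 'g word \<Rightarrow> int" where
  "esum g w = (\<Sum>x\<leftarrow>w. if fst x = g then (if snd x then -1 else 1) else 0)"

text \<open>The induced map phi_* on H_1(S) = Z^2 (basis a, b), entries and trace/det.\<close>
definition hom_matrix :: "(gS \<Rightarrow> gS word) \<Rightarrow> gS \<Rightarrow> gS \<Rightarrow> int" where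
  "hom_matrix phi i j = esum i (phi j)"

definition hom_trace :: "(gS \<Rightarrow> gS word) \<Rightarrow> int" where
  "hom_trace phi = hom_matrix phi Ga Ga + hom_matrix phi Gb Gb"

definition hom_det :: "(gS \<Rightarrow> gS word) \<Rightarrow> int" where
  "hom_det phi = hom_matrix phi Ga Ga * hom_matrix phi Gb Gb - hom_matrix phi Ga Gb * hom_matrix phi Gb Ga"

definition SL2 :: "cmat set" where
  "SL2 = {A. det A = 1}"

definition eval_word :: "('g \<Rightarrow> cmat) \<Rightarrow> 'g word \<Rightarrow> cmat" where
  "eval_word \<rho> w = foldr (\<lambda>(g, e) M. (if e then matrix_inv (\<rho> g) else \<rho> g) ** M) w (mat 1)"

text \<open>Representations of pi_1(S) (free group: any assignment of generators into SL(2,C)).\<close>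
definition repS :: "(gS \<Rightarrow> cmat) \<Rightarrow> bool" where
  "repS \<sigma> \<longleftrightarrow> (\<forall>g. \<sigma> g \<in> SL2)"

text \<open>Representations of pi_1(M_phi) = < t,a,b | t^-1 a t = phi(a), t^-1 b t = phi(b) >.\<close>
definition repM :: "(gS \<Rightarrow> gS word) \<Rightarrow> (gM \<Rightarrow> cmat) \<Rightarrow> bool" where
  "repM phi \<rho> \<longleftrightarrow> (\<forall>g. \<rho> g \<in> SL2) \<and>
     (\<forall>g. matrix_inv (\<rho> Gt) ** \<rho> (Fib g) ** \<rho> Gt = eval_word (\<lambda>x. \<rho> (Fib x)) (phi g))"

definition character :: "('g \<Rightarrow> cmat) \<Rightarrow> 'g word \<Rightarrow> complex" where
  "character \<rho> w = trace (eval_word \<rho> w)"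

text \<open>Character varieties, as the sets of characters of SL(2,C)-representations.\<close>
definition XS :: "(gS word \<Rightarrow> complex) set" where
  "XS = {character \<sigma> | \<sigma>. repS \<sigma>}"

definition XM :: "(gS \<Rightarrow> gS word) \<Rightarrow> (gM word \<Rightarrow> complex) set" where
  "XM phi = {character \<rho> | \<rho>. repM phi \<rho>}"

definition restr :: "(gM word \<Rightarrow> complex) \<Rightarrow> gS word \<Rightarrow> complex" where
  "restr ch = (\<lambda>w. ch (map (\<lambda>(g, e). (Fib g, e)) w))"

definition phi_act :: "(gS \<Rightarrow> gS word) \<Rightarrow> (gS word \<Rightarrow> complex) \<Rightarrow> gS word \<Rightarrow> complex" where
  "phi_act phi ch = (\<lambda>w. ch (wsubst phi w))"

definition X_phi :: "(gS \<Rightarrow> gS word) \<Rightarrow> (gS word \<Rightarrow> complex) set" where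
  "X_phi phi = {ch \<in> XS. phi_act phi ch = ch}"

definition reducible :: "('g \<Rightarrow> cmat) \<Rightarrow> bool" where
  "reducible \<sigma> \<longleftrightarrow> (\<exists>v::complex^2. v \<noteq> 0 \<and> (\<forall>w. \<exists>c. eval_word \<sigma> w *v v = c *s v))"

end

theory Submission
  imports Defs
begin

text \<open>
  Restriction lands in \<open>X\<^sub>\<phi>(S)\<close>: if \<open>\<rho>\<close> represents \<open>\<pi>\<^sub>1(M\<^sub>\<phi>)\<close>, conjugation by \<open>\<rho>(t)\<close>
  carries \<open>\<rho>|\<^sub>S\<close> to \<open>\<rho>|\<^sub>S \<circ> \<phi>\<close>, and traces are invariant under conjugation.

  Conversely, let the character of \<open>\<sigma>\<close> be \<open>\<phi>\<close>-invariant; it suffices to find \<open>T \<in> SL(2,\<complex>)\<close>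
  conjugating \<open>\<sigma>\<close> to \<open>\<sigma> \<circ> \<phi>\<close>, for then \<open>t \<mapsto> T\<close> extends \<open>\<sigma>\<close>. If \<open>\<sigma>\<close> is irreducible, so is
  \<open>\<sigma> \<circ> \<phi>\<close> because \<open>\<phi>\<close> is an automorphism, and an irreducible pair \<open>(A, B)\<close> is determined up to
  conjugacy by \<open>tr A\<close>, \<open>tr B\<close> and \<open>tr AB\<close>. If \<open>\<sigma>\<close> is reducible, its character is that of a
  diagonal representation \<open>diag(\<kappa>, \<kappa>\<^sup>-\<^sup>1)\<close>, and invariance forces \<open>\<kappa> \<circ> \<phi> = \<kappa>\<^sup>\<plusminus>\<^sup>1\<close> on the
  generators; this is realised by \<open>T = 1\<close> or by a rotation swapping the diagonal entries.

  Finally, \<open>\<kappa> \<circ> \<phi> = \<kappa>\<^sup>\<plusminus>\<^sup>1\<close> makes \<open>\<kappa>(a)\<close> and \<open>\<kappa>(b)\<close> roots of unity of order dividing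
  \<open>det (\<phi>\<^sub>* \<mp> 1) = 2 \<mp> tr \<phi>\<^sub>*\<close>, which is nonzero since \<open>|tr \<phi>\<^sub>*| > 2\<close>; so only
  finitely many reducible characters are \<open>\<phi>\<close>-invariant.
\<close>

section \<open>Two-by-two matrices\<close>

definition mat2 :: "'a \<Rightarrow> 'a \<Rightarrow> 'a \<Rightarrow> 'a \<Rightarrow> 'a^2^2" where
  "mat2 a b c d = (\<chi> i j. if i = 1 then (if j = 1 then a else b) else (if j = 1 then c else d))"

lemma mat2_nth [simp]:
  "mat2 a b c d $ 1 $ 1 = a" "mat2 a b c d $ 1 $ 2 = b"
  "mat2 a b c d $ 2 $ 1 = c" "mat2 a b c d $ 2 $ 2 = d"
  by (simp_all add: mat2_def)

lemma matrix2_eq_iff: "(A::'a^2^2) = B \<longleftrightarrow> A$1$1 = B$1$1 \<and> A$1$2 = B$1$2 \<and> A$2$1 = B$2$1 \<and> A$2$2 = B$2$2"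
  by (auto simp: vec_eq_iff forall_2)

lemma vector2_eq_iff: "(x::'a^2) = y \<longleftrightarrow> x$1 = y$1 \<and> x$2 = y$2"
  by (auto simp: vec_eq_iff forall_2)

lemma vector2_eq_0_iff: "(x::'a::zero^2) = 0 \<longleftrightarrow> x$1 = 0 \<and> x$2 = 0"
  by (simp add: vector2_eq_iff)

definition vec2 :: "'a \<Rightarrow> 'a \<Rightarrow> 'a^2" where
  "vec2 a b = (\<chi> i. if i = 1 then a else b)"

lemma vec2_nth [simp]: "vec2 a b $ 1 = a" "vec2 a b $ 2 = b"
  by (simp_all add: vec2_def)

lemma matrix2_mult_nth [simp]:
  fixes A B :: "'a::semiring_1^2^2"
  shows "(A ** B)$1$1 = A$1$1 * B$1$1 + A$1$2 * B$2$1"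
    "(A ** B)$1$2 = A$1$1 * B$1$2 + A$1$2 * B$2$2"
    "(A ** B)$2$1 = A$2$1 * B$1$1 + A$2$2 * B$2$1"
    "(A ** B)$2$2 = A$2$1 * B$1$2 + A$2$2 * B$2$2"
  by (simp_all add: matrix_matrix_mult_def sum_2)

lemma matrix2_vector_mult_nth [simp]:
  fixes A :: "'a::semiring_1^2^2"
  shows "(A *v x)$1 = A$1$1 * x$1 + A$1$2 * x$2" "(A *v x)$2 = A$2$1 * x$1 + A$2$2 * x$2"
  by (simp_all add: matrix_vector_mult_def sum_2)

lemma mat_nth_2 [simp]:
  "(mat c :: 'a::zero^2^2)$1$1 = c" "(mat c :: 'a^2^2)$1$2 = 0"
  "(mat c :: 'a^2^2)$2$1 = 0" "(mat c :: 'a^2^2)$2$2 = c"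
  by (simp_all add: mat_def)

lemma trace_2: "trace (A::'a::semiring_1^2^2) = A$1$1 + A$2$2"
  by (simp add: trace_def sum_2)

lemma matrix_inv_unique:
  fixes A B :: "'a::semiring_1^'n^'n"
  assumes "A ** B = mat 1" "B ** A = mat 1"
  shows "matrix_inv A = B"
proof -
  have "A ** matrix_inv A = mat 1 \<and> matrix_inv A ** A = mat 1"
    unfolding matrix_inv_def by (rule someI[of _ B]) (use assms in blast)
  then show ?thesis
    using assms by (metis matrix_mul_assoc matrix_mul_lid matrix_mul_rid)
qed

lemma matrix_inv_left:
  "invertible (A::'a::semiring_1^'n^'n) \<Longrightarrow> matrix_inv A ** A = mat 1"
  by (metis invertible_def matrix_inv_unique)

lemma matrix_inv_right:
  "invertible (A::'a::semiring_1^'n^'n) \<Longrightarrow> A ** matrix_inv A = mat 1"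
  by (metis invertible_def matrix_inv_unique)

lemma invertible_matrix_inv:
  "invertible (A::'a::semiring_1^'n^'n) \<Longrightarrow> invertible (matrix_inv A)"
  by (meson invertible_def matrix_inv_left matrix_inv_right)

lemma matrix_inv_inv:
  "invertible (A::'a::semiring_1^'n^'n) \<Longrightarrow> matrix_inv (matrix_inv A) = A"
  by (simp add: matrix_inv_left matrix_inv_right matrix_inv_unique)

lemma matrix_inv_mult:
  fixes A B :: "'a::semiring_1^'n^'n"
  assumes "invertible A" "invertible B"
  shows "matrix_inv (A ** B) = matrix_inv B ** matrix_inv A"
proof (rule matrix_inv_unique)
  show "A ** B ** (matrix_inv B ** matrix_inv A) = mat 1"
    by (metis assms matrix_inv_right matrix_mul_assoc matrix_mul_rid)
  show "matrix_inv B ** matrix_inv A ** (A ** B) = mat 1"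
    by (metis assms matrix_inv_left matrix_mul_assoc matrix_mul_rid)
qed

lemma invertible_mat1 [simp]: "invertible (mat 1 :: 'a::semiring_1^'n^'n)"
  unfolding invertible_def by (metis matrix_mul_lid)

lemma matrix_inv_mat1 [simp]: "matrix_inv (mat 1 :: 'a::semiring_1^'n^'n) = mat 1"
  by (simp add: matrix_inv_unique)

lemma matrix_inv_mat2:
  fixes a b c d :: "'a::comm_ring_1"
  assumes "a * d - b * c = 1"
  shows "matrix_inv (mat2 a b c d) = mat2 d (- b) (- c) a"
  by (rule matrix_inv_unique) (use assms in \<open>auto simp: matrix2_eq_iff algebra_simps\<close>)

lemma trace_conj:
  fixes M T :: "'a::comm_semiring_1^'n^'n"
  assumes "invertible T"
  shows "trace (matrix_inv T ** M ** T) = trace M"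
  by (metis assms matrix_inv_right matrix_mul_assoc matrix_mul_lid trace_mul_sym)

lemma SL2_iff: "A \<in> SL2 \<longleftrightarrow> A$1$1 * A$2$2 - A$1$2 * A$2$1 = 1"
  by (simp add: SL2_def det_2)

lemma SL2_invertible: "A \<in> SL2 \<Longrightarrow> invertible A"
  by (simp add: SL2_def invertible_det_nz)

lemma mat1_SL2 [simp]: "mat 1 \<in> SL2"
  by (simp add: SL2_def)

lemma SL2_mult: "A \<in> SL2 \<Longrightarrow> B \<in> SL2 \<Longrightarrow> A ** B \<in> SL2"
  by (simp add: SL2_def det_mul)

lemma SL2_matrix_inv:
  assumes "A \<in> SL2"
  shows "matrix_inv A \<in> SL2"
proof -
  have "det (matrix_inv A) * det A = 1"
    using assms by (metis SL2_invertible det_I det_mul matrix_inv_left)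
  then show ?thesis
    using assms by (simp add: SL2_def)
qed

section \<open>Evaluation of words\<close>

lemma eval_word_Nil [simp]: "eval_word \<sigma> [] = mat 1"
  by (simp add: eval_word_def)

lemma eval_word_Cons [simp]:
  "eval_word \<sigma> ((g, e) # w) = (if e then matrix_inv (\<sigma> g) else \<sigma> g) ** eval_word \<sigma> w"
  by (simp add: eval_word_def)

lemma eval_word_append: "eval_word \<sigma> (u @ w) = eval_word \<sigma> u ** eval_word \<sigma> w"
  by (induction u) (auto simp: matrix_mul_assoc)

lemma eval_word_single [simp]: "eval_word \<sigma> [(g, False)] = \<sigma> g"
  by simp

lemma eval_word_SL2: "range \<sigma> \<subseteq> SL2 \<Longrightarrow> eval_word \<sigma> w \<in> SL2"
  by (induction w) (auto simp: image_subset_iff intro!: SL2_mult SL2_matrix_inv)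

lemma UNIV_gS: "UNIV = {Ga, Gb}"
  by (metis UNIV_eq_I gS.exhaust insert_iff)

lemma all_gS: "(\<forall>g. P g) \<longleftrightarrow> P Ga \<and> P Gb"
  by (metis gS.exhaust)

lemma winv_Nil [simp]: "winv [] = []"
  by (simp add: winv_def)

lemma wsubst_Nil [simp]: "wsubst f [] = []"
  by (simp add: wsubst_def)

lemma winv_Cons: "winv ((g, e) # w) = winv w @ [(g, \<not> e)]"
  by (simp add: winv_def)

lemma wsubst_Cons: "wsubst f ((g, e) # w) = (if e then winv (f g) else f g) @ wsubst f w"
  by (simp add: wsubst_def)

lemma wsubst_single [simp]: "wsubst f [(g, False)] = f g"
  by (simp add: wsubst_def)

lemma wsubst_pair: "wsubst f [(g, False), (h, False)] = f g @ f h"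
  by (simp add: wsubst_def)

context
  fixes \<sigma> :: "'g \<Rightarrow> cmat"
  assumes invertible: "\<And>g. invertible (\<sigma> g)"
begin

lemma invertible_eval_word: "invertible (eval_word \<sigma> w)"
  by (induction w) (auto simp: invertible invertible_matrix_inv invertible_mult)

lemma eval_word_winv: "eval_word \<sigma> (winv w) = matrix_inv (eval_word \<sigma> w)"
proof (induction w)
  case (Cons x w)
  obtain g e where x: "x = (g, e)" by force
  have "eval_word \<sigma> (winv (x # w)) = matrix_inv (eval_word \<sigma> w) ** (if e then \<sigma> g else matrix_inv (\<sigma> g))"
    by (simp add: x winv_Cons eval_word_append Cons)
  also have "\<dots> = matrix_inv (eval_word \<sigma> (x # w))"
    by (simp add: x invertible invertible_eval_word invertible_matrix_inv matrix_inv_mult matrix_inv_inv)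
  finally show ?case .
qed simp

lemma eval_word_wsubst: "eval_word \<sigma> (wsubst f w) = eval_word (\<lambda>g. eval_word \<sigma> (f g)) w"
proof (induction w)
  case (Cons x w)
  then show ?case
    by (cases x) (simp add: wsubst_Cons eval_word_append eval_word_winv)
qed simp

lemma eval_word_push: "eval_word \<sigma> (push x w) = eval_word \<sigma> (x # w)"
proof (cases w)
  case (Cons y w')
  obtain g e h f where x: "x = (g, e)" and y: "y = (h, f)" by force
  show ?thesis
    using invertible[of g]
    by (cases f) (auto simp: Cons x y matrix_mul_assoc matrix_inv_left matrix_inv_right)
qed simp

lemma eval_word_freduce: "eval_word \<sigma> (freduce w) = eval_word \<sigma> w"
proof (induction w)
  case (Cons x w)
  then show ?case
    by (cases x) (simp add: freduce_def eval_word_push)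
qed (simp add: freduce_def)

lemma eval_word_conj:
  assumes "invertible T"
  shows "eval_word (\<lambda>g. matrix_inv T ** \<sigma> g ** T) w = matrix_inv T ** eval_word \<sigma> w ** T"
proof (induction w)
  case (Cons x w)
  have cancel: "(matrix_inv T ** X ** T) ** (matrix_inv T ** Y ** T) = matrix_inv T ** (X ** Y) ** T"
    for X Y :: cmat
    by (metis assms matrix_inv_right matrix_mul_assoc matrix_mul_lid)
  have "matrix_inv (matrix_inv T ** \<sigma> g ** T) = matrix_inv T ** matrix_inv (\<sigma> g) ** T" for g
    by (simp add: assms invertible invertible_matrix_inv invertible_mult matrix_inv_mult
        matrix_inv_inv matrix_mul_assoc)
  then show ?case
    using Cons by (cases x) (simp add: cancel)
qed (simp add: assms matrix_inv_left)

end

section \<open>Reducible representations\<close>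

lemma eigenvalue_nonzero:
  fixes M :: "'a::field^'n^'n"
  assumes "invertible M" "v \<noteq> 0" "M *v v = c *s v"
  shows "c \<noteq> 0"
proof
  assume "c = 0"
  have "v = (matrix_inv M ** M) *v v"
    using assms(1) by (simp add: matrix_inv_left)
  also have "\<dots> = 0"
    using assms(3) \<open>c = 0\<close> by (simp add: matrix_vector_mul_assoc[symmetric])
  finally show False
    using assms(2) by contradiction
qed

lemma matrix_inv_eigenvector:
  fixes M :: "'a::field^'n^'n"
  assumes "invertible M" "v \<noteq> 0" "M *v v = c *s v"
  shows "matrix_inv M *v v = inverse c *s v"
proof -
  have "v = (matrix_inv M ** M) *v v"
    using assms(1) by (simp add: matrix_inv_left)
  also have "\<dots> = c *s (matrix_inv M *v v)"
    by (simp add: matrix_vector_mul_assoc[symmetric] assms(3) vector_scalar_commute)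
  finally have "inverse c *s v = (inverse c * c) *s (matrix_inv M *v v)"
    by (metis vector_smult_assoc)
  then show ?thesis
    using eigenvalue_nonzero[OF assms] by simp
qed

lemma trace_eigenvalue_2:
  fixes M :: "'a::field^2^2"
  assumes "det M = 1" "v \<noteq> 0" "M *v v = c *s v"
  shows "trace M = c + inverse c"
proof -
  have c: "c \<noteq> 0"
    using assms eigenvalue_nonzero invertible_det_nz by fastforce
  define D where "D = (M$1$1 - c) * (M$2$2 - c) - M$1$2 * M$2$1"
  have "D * v$1 = 0" "D * v$2 = 0"
    using assms(3) unfolding D_def vector2_eq_iff by (simp_all, algebra+)
  then have "D = 0"
    using assms(2) by (auto simp: vector2_eq_0_iff)
  then have "c * c - c * (M$1$1 + M$2$2) + 1 = 0"
    using assms(1) unfolding D_def det_2 by algebra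
  then show ?thesis
    using c by (simp add: trace_2 field_simps)
qed

fun eval_scalar :: "('g \<Rightarrow> 'a::field) \<Rightarrow> 'g word \<Rightarrow> 'a" where
  "eval_scalar \<kappa> [] = 1"
| "eval_scalar \<kappa> ((g, e) # w) = (if e then inverse (\<kappa> g) else \<kappa> g) * eval_scalar \<kappa> w"

lemma eval_scalar_append: "eval_scalar \<kappa> (u @ w) = eval_scalar \<kappa> u * eval_scalar \<kappa> w"
  by (induction \<kappa> u rule: eval_scalar.induct) auto

lemma eval_scalar_nonzero: "(\<And>g. \<kappa> g \<noteq> 0) \<Longrightarrow> eval_scalar \<kappa> w \<noteq> 0"
  by (induction \<kappa> w rule: eval_scalar.induct) auto

lemma eval_word_common_eigenvector:
  assumes "\<And>g. invertible (\<sigma> g)" "v \<noteq> 0" "\<And>g. \<sigma> g *v v = \<kappa> g *s v"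
  shows "eval_word \<sigma> w *v v = eval_scalar \<kappa> w *s v"
proof (induction w)
  case (Cons x w)
  have "matrix_inv (\<sigma> g) *v v = inverse (\<kappa> g) *s v" for g
    using assms by (rule matrix_inv_eigenvector)
  then show ?case
    using Cons assms(3)
    by (cases x) (simp add: matrix_vector_mul_assoc[symmetric] vector_scalar_commute
        vector_smult_assoc mult.commute)
qed simp

lemma reducible_iff_generators:
  assumes "\<And>g. invertible (\<sigma> g)"
  shows "reducible \<sigma> \<longleftrightarrow> (\<exists>v. v \<noteq> 0 \<and> (\<exists>\<kappa>. \<forall>g. \<sigma> g *v v = \<kappa> g *s v))"
proof
  assume "reducible \<sigma>"
  then obtain v where "v \<noteq> 0" "\<forall>g. \<exists>c. \<sigma> g *v v = c *s v"
    unfolding reducible_def by (metis eval_word_single)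
  then show "\<exists>v. v \<noteq> 0 \<and> (\<exists>\<kappa>. \<forall>g. \<sigma> g *v v = \<kappa> g *s v)"
    by (metis choice)
next
  assume "\<exists>v. v \<noteq> 0 \<and> (\<exists>\<kappa>. \<forall>g. \<sigma> g *v v = \<kappa> g *s v)"
  then obtain v \<kappa> where "v \<noteq> 0" "\<And>g. \<sigma> g *v v = \<kappa> g *s v"
    by blast
  then have "eval_word \<sigma> w *v v = eval_scalar \<kappa> w *s v" for w
    using assms by (rule eval_word_common_eigenvector[rotated])
  then show "reducible \<sigma>"
    unfolding reducible_def using \<open>v \<noteq> 0\<close> by blast
qed

lemma reducible_substitution:
  assumes "\<And>g. invertible (\<sigma> g)" "reducible \<sigma>"
  shows "reducible (\<lambda>g. eval_word \<sigma> (f g))"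
  using assms(2) unfolding reducible_def by (metis assms(1) eval_word_wsubst)

definition diag_rep :: "('g \<Rightarrow> complex) \<Rightarrow> 'g \<Rightarrow> cmat" where
  "diag_rep \<kappa> g = mat2 (\<kappa> g) 0 0 (inverse (\<kappa> g))"

lemma diag_rep_SL2: "\<kappa> g \<noteq> 0 \<Longrightarrow> diag_rep \<kappa> g \<in> SL2"
  by (simp add: diag_rep_def SL2_iff)

lemma eval_word_diag_rep:
  assumes "\<And>g. \<kappa> g \<noteq> 0"
  shows "eval_word (diag_rep \<kappa>) w = mat2 (eval_scalar \<kappa> w) 0 0 (inverse (eval_scalar \<kappa> w))"
proof (induction w)
  case (Cons x w)
  then show ?case
    using assms by (cases x) (simp add: diag_rep_def matrix_inv_mat2 matrix2_eq_iff)
qed (simp add: matrix2_eq_iff)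

lemma character_diag_rep:
  "(\<And>g. \<kappa> g \<noteq> 0) \<Longrightarrow> character (diag_rep \<kappa>) w = eval_scalar \<kappa> w + inverse (eval_scalar \<kappa> w)"
  by (simp add: character_def eval_word_diag_rep trace_2)

lemma reducible_character_diag_rep:
  assumes "range \<sigma> \<subseteq> SL2" "reducible \<sigma>"
  obtains \<kappa> where "\<And>g. \<kappa> g \<noteq> 0" "character \<sigma> = character (diag_rep \<kappa>)"
proof -
  have inv: "\<And>g. invertible (\<sigma> g)"
    using assms(1) SL2_invertible by blast
  then obtain v \<kappa> where v: "v \<noteq> 0" "\<And>g. \<sigma> g *v v = \<kappa> g *s v"
    using assms(2) reducible_iff_generators by metis
  have nz: "\<kappa> g \<noteq> 0" for g
    using eigenvalue_nonzero inv v by metis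
  have "character \<sigma> w = character (diag_rep \<kappa>) w" for w
  proof -
    have "det (eval_word \<sigma> w) = 1"
      using eval_word_SL2[OF assms(1)] by (simp add: SL2_def)
    moreover have "eval_word \<sigma> w *v v = eval_scalar \<kappa> w *s v"
      using inv v by (rule eval_word_common_eigenvector)
    ultimately show ?thesis
      unfolding character_def[of \<sigma>] character_diag_rep[OF nz]
      by (rule trace_eigenvalue_2[OF _ v(1)])
  qed
  then show thesis
    using that nz by blast
qed

section \<open>Irreducible representations are determined by their characters\<close>

definition common_eigenvector :: "'a::field^2^2 \<Rightarrow> 'a^2^2 \<Rightarrow> bool" where
  "common_eigenvector A B \<longleftrightarrow> (\<exists>v. v \<noteq> 0 \<and> (\<exists>a. A *v v = a *s v) \<and> (\<exists>b. B *v v = b *s v))"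

lemma eigenvector_exists_2:
  fixes B :: "'a::field^2^2"
  assumes "(B$1$1 - m) * (B$2$2 - m) - B$1$2 * B$2$1 = 0"
  obtains v where "v \<noteq> 0" "B *v v = m *s v"
proof (cases "B$1$1 - m \<noteq> 0 \<or> B$1$2 \<noteq> 0")
  case True
  show thesis
    by (rule that[of "vec2 (B$1$2) (m - B$1$1)"])
      (use True assms in \<open>auto simp: vector2_eq_iff algebra_simps\<close>)
next
  case first_row_zero: False
  show thesis
  proof (cases "B$2$1 \<noteq> 0 \<or> B$2$2 - m \<noteq> 0")
    case True
    show thesis
      by (rule that[of "vec2 (m - B$2$2) (B$2$1)"])
        (use True first_row_zero assms in \<open>auto simp: vector2_eq_iff algebra_simps\<close>)
  next
    case False
    show thesis
      by (rule that[of "vec2 1 0"])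
        (use False first_row_zero in \<open>auto simp: vector2_eq_iff algebra_simps\<close>)
  qed
qed

lemma cross_nonzero_if_not_parallel:
  fixes v w :: "'a::field^2"
  assumes "v \<noteq> 0" "\<nexists>a. w = a *s v"
  shows "v$1 * w$2 - v$2 * w$1 \<noteq> 0"
proof
  assume cross: "v$1 * w$2 - v$2 * w$1 = 0"
  show False
  proof (cases "v$1 = 0")
    case False
    then have "w = (w$1 / v$1) *s v"
      using cross by (auto simp: vector2_eq_iff field_simps)
    then show False
      using assms(2) by blast
  next
    case True
    then have "v$2 \<noteq> 0"
      using assms(1) by (simp add: vector2_eq_0_iff)
    then have "w = (w$2 / v$2) *s v"
      using True cross by (auto simp: vector2_eq_iff field_simps)
    then show False
      using assms(2) by blast
  qed
qed

lemma intertwiner_conj: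
  fixes A C Q :: "'a::semiring_1^'n^'n"
  assumes "invertible Q" "A ** Q = Q ** C"
  shows "matrix_inv Q ** A ** Q = C"
  by (metis assms matrix_inv_left matrix_mul_assoc matrix_mul_lid)

text \<open>Normal form of a pair without common eigenvector, in the basis \<open>v, A v\<close> where \<open>v\<close> is
  an eigenvector of \<open>B\<close>: it depends only on \<open>tr A\<close>, \<open>tr B\<close>, \<open>tr AB\<close> and the choice of
  the eigenvalue \<open>m\<close>.\<close>

lemma irreducible_pair_normal_form:
  fixes A B :: "'a::field^2^2"
  assumes dA: "det A = 1" and dB: "det B = 1" and m: "m * m - trace B * m + 1 = 0"
    and irred: "\<not> common_eigenvector A B"
  obtains Q where "invertible Q" "A ** Q = Q ** mat2 0 (-1) 1 (trace A)"
    "B ** Q = Q ** mat2 m (trace (A ** B) - trace A / m) 0 (1 / m)"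
proof -
  have "m \<noteq> 0"
    using m by auto
  have "(B$1$1 - m) * (B$2$2 - m) - B$1$2 * B$2$1 = 0"
    using m dB unfolding det_2 trace_2 by algebra
  then obtain v where v: "v \<noteq> 0" "B *v v = m *s v"
    by (rule eigenvector_exists_2)
  define w where "w = A *v v"
  define d where "d = v$1 * w$2 - v$2 * w$1"
  have "d \<noteq> 0"
    unfolding d_def using irred v unfolding common_eigenvector_def w_def
    by (intro cross_nonzero_if_not_parallel) blast+
  define Q where "Q = mat2 (v$1) (w$1) (v$2) (w$2)"
  have Q: "invertible Q"
    using \<open>d \<noteq> 0\<close> by (simp add: invertible_det_nz Q_def d_def det_2 mult.commute)
  define u where "u = B *v w"
  define CA where "CA = mat2 0 (-1) 1 (trace A)"
  define e where "e = inverse d"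
  have "d * e = 1"
    using \<open>d \<noteq> 0\<close> by (simp add: e_def)
  \<comment> \<open>\<open>A *v w = trace A *s w - v\<close> by Cayley-Hamilton, and the second column of \<open>CB\<close> holds
    the coordinates of \<open>u = B *v w\<close> in the basis \<open>v, w\<close> (Cramer's rule)\<close>
  define CB where "CB = mat2 m ((u$1 * w$2 - u$2 * w$1) * e) 0 ((v$1 * u$2 - v$2 * u$1) * e)"
  have A: "A ** Q = Q ** CA"
    unfolding CA_def Q_def w_def using dA
    by (simp add: matrix2_eq_iff det_2 trace_2) algebra
  have "B$1$1 * v$1 + B$1$2 * v$2 = m * v$1" "B$2$1 * v$1 + B$2$2 * v$2 = m * v$2"
    using v(2) by (simp_all add: vector2_eq_iff)
  then have B: "B ** Q = Q ** CB"
    using \<open>d * e = 1\<close> unfolding CB_def Q_def u_def d_def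
    by (simp add: matrix2_eq_iff; intro conjI; algebra)
  have "trace B = trace CB"
    using trace_conj[OF Q, of B] intertwiner_conj[OF Q B] by simp
  then have "CB$2$2 * m = 1"
    using m by (simp add: CB_def trace_2) algebra
  then have CB22: "CB$2$2 = 1 / m"
    using \<open>m \<noteq> 0\<close> by (simp add: field_simps)
  have "A ** B ** Q = Q ** (CA ** CB)"
    by (metis A B matrix_mul_assoc)
  then have "trace (A ** B) = trace (CA ** CB)"
    using trace_conj[OF Q, of "A ** B"] intertwiner_conj[OF Q] by metis
  then have "CB = mat2 m (trace (A ** B) - trace A / m) 0 (1 / m)"
    using CB22 by (simp add: CA_def CB_def trace_2 matrix2_eq_iff)
  then show thesis
    using that Q A B CA_def by blast
qed

lemma SL2_intertwiner:
  assumes "invertible (T::cmat)"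
  obtains T1 where "T1 \<in> SL2" "\<And>X Y. X ** T = T ** Y \<Longrightarrow> matrix_inv T1 ** X ** T1 = Y"
proof -
  define s where "s = csqrt (det T)"
  have "s * s = det T"
    unfolding s_def by (metis power2_csqrt power2_eq_square)
  moreover have "det T \<noteq> 0"
    using assms by (simp add: invertible_det_nz)
  ultimately have "s \<noteq> 0"
    by auto
  define T1 where "T1 = T ** mat (inverse s)"
  have T1: "T1 \<in> SL2"
    using \<open>s * s = det T\<close> \<open>s \<noteq> 0\<close> by (simp add: T1_def SL2_def det_mul det_2 field_simps)
  have "matrix_inv T1 ** X ** T1 = Y" if "X ** T = T ** Y" for X Y
  proof (rule intertwiner_conj[OF SL2_invertible[OF T1]])
    have "Y ** mat (inverse s) = mat (inverse s) ** Y"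
      by (simp add: matrix2_eq_iff mult.commute)
    then show "X ** T1 = T1 ** Y"
      unfolding T1_def by (metis that matrix_mul_assoc)
  qed
  then show thesis
    using that T1 by blast
qed

lemma irreducible_pairs_conjugate:
  fixes A B A' B' :: cmat
  assumes SL2: "A \<in> SL2" "B \<in> SL2" "A' \<in> SL2" "B' \<in> SL2"
    and traces: "trace A' = trace A" "trace B' = trace B" "trace (A' ** B') = trace (A ** B)"
    and irred: "\<not> common_eigenvector A B" "\<not> common_eigenvector A' B'"
  obtains T where "T \<in> SL2" "matrix_inv T ** A ** T = A'" "matrix_inv T ** B ** T = B'"
proof -
  define y where "y = trace B"
  define m where "m = (y + csqrt (y * y - 4)) / 2"
  have "csqrt (y * y - 4) * csqrt (y * y - 4) = y * y - 4"
    by (metis power2_csqrt power2_eq_square)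
  then have m: "m * m - y * m + 1 = 0"
    unfolding m_def by (simp add: field_simps) algebra
  have det: "det A = 1" "det B = 1" "det A' = 1" "det B' = 1"
    using SL2 by (simp_all add: SL2_def)
  have m': "m * m - trace B' * m + 1 = 0"
    using m traces(2) by (simp add: y_def)
  obtain Q where Q: "invertible Q" "A ** Q = Q ** mat2 0 (-1) 1 (trace A)"
      "B ** Q = Q ** mat2 m (trace (A ** B) - trace A / m) 0 (1 / m)"
    using irreducible_pair_normal_form[OF det(1,2) m[unfolded y_def] irred(1)] by blast
  obtain Q' where Q': "invertible Q'" "A' ** Q' = Q' ** mat2 0 (-1) 1 (trace A)"
      "B' ** Q' = Q' ** mat2 m (trace (A ** B) - trace A / m) 0 (1 / m)"
    using irreducible_pair_normal_form[OF det(3,4) m' irred(2)] unfolding traces by blast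
  define T where "T = Q ** matrix_inv Q'"
  have "invertible T"
    unfolding T_def using Q'(1) Q(1) by (simp add: invertible_matrix_inv invertible_mult)
  have intertwines: "X ** T = T ** X'" if "X ** Q = Q ** C" "X' ** Q' = Q' ** C" for X X' C
  proof -
    have "matrix_inv Q' ** X' = C ** matrix_inv Q'"
      by (metis Q'(1) that(2) matrix_inv_left matrix_inv_right matrix_mul_assoc
          matrix_mul_lid matrix_mul_rid)
    then show ?thesis
      unfolding T_def by (metis that(1) matrix_mul_assoc)
  qed
  obtain T1 where "T1 \<in> SL2" "\<And>X Y. X ** T = T ** Y \<Longrightarrow> matrix_inv T1 ** X ** T1 = Y"
    using SL2_intertwiner[OF \<open>invertible T\<close>] by blast
  then show thesis
    using that intertwines[OF Q(2) Q'(2)] intertwines[OF Q(3) Q'(3)] by blast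
qed

lemma reducible_iff_common_eigenvector:
  fixes \<sigma> :: "gS \<Rightarrow> cmat"
  assumes "range \<sigma> \<subseteq> SL2"
  shows "reducible \<sigma> \<longleftrightarrow> common_eigenvector (\<sigma> Ga) (\<sigma> Gb)"
proof -
  have "(\<exists>\<kappa>. \<forall>g. \<sigma> g *v v = \<kappa> g *s v) \<longleftrightarrow> (\<exists>a. \<sigma> Ga *v v = a *s v) \<and> (\<exists>b. \<sigma> Gb *v v = b *s v)"
    for v
  proof
    assume "\<exists>\<kappa>. \<forall>g. \<sigma> g *v v = \<kappa> g *s v"
    then show "(\<exists>a. \<sigma> Ga *v v = a *s v) \<and> (\<exists>b. \<sigma> Gb *v v = b *s v)"
      by blast
  next
    assume "(\<exists>a. \<sigma> Ga *v v = a *s v) \<and> (\<exists>b. \<sigma> Gb *v v = b *s v)"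
    then obtain a b where "\<sigma> Ga *v v = a *s v" "\<sigma> Gb *v v = b *s v"
      by blast
    then have "\<forall>g. \<sigma> g *v v = (case g of Ga \<Rightarrow> a | Gb \<Rightarrow> b) *s v"
      by (simp add: all_gS)
    then show "\<exists>\<kappa>. \<forall>g. \<sigma> g *v v = \<kappa> g *s v"
      by blast
  qed
  moreover have "\<And>g. invertible (\<sigma> g)"
    using assms SL2_invertible by blast
  ultimately show ?thesis
    by (simp add: reducible_iff_generators common_eigenvector_def)
qed

lemma irreducible_reps_conjugate:
  fixes \<sigma> \<sigma>' :: "gS \<Rightarrow> cmat"
  assumes SL2: "range \<sigma> \<subseteq> SL2" "range \<sigma>' \<subseteq> SL2"
    and irred: "\<not> reducible \<sigma>" "\<not> reducible \<sigma>'"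
    and char: "character \<sigma>' = character \<sigma>"
  obtains T where "T \<in> SL2" "\<And>g. matrix_inv T ** \<sigma> g ** T = \<sigma>' g"
proof -
  have in_SL2: "\<sigma> g \<in> SL2" "\<sigma>' g \<in> SL2" for g
    using SL2 by auto
  have traces: "trace (\<sigma>' g) = trace (\<sigma> g)" for g
    using fun_cong[OF char, of "[(g, False)]"] by (simp add: character_def)
  have trace_prod: "trace (\<sigma>' Ga ** \<sigma>' Gb) = trace (\<sigma> Ga ** \<sigma> Gb)"
    using fun_cong[OF char, of "[(Ga, False), (Gb, False)]"] by (simp add: character_def)
  have "\<not> common_eigenvector (\<sigma> Ga) (\<sigma> Gb)" "\<not> common_eigenvector (\<sigma>' Ga) (\<sigma>' Gb)"
    using irred reducible_iff_common_eigenvector SL2 by blast+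
  then obtain T where T: "T \<in> SL2" "matrix_inv T ** \<sigma> Ga ** T = \<sigma>' Ga"
    "matrix_inv T ** \<sigma> Gb ** T = \<sigma>' Gb"
    by (rule irreducible_pairs_conjugate[OF in_SL2(1) in_SL2(1) in_SL2(2) in_SL2(2) traces traces trace_prod])
  then have "matrix_inv T ** \<sigma> g ** T = \<sigma>' g" for g
    by (cases g) simp_all
  then show thesis
    using that T(1) by blast
qed

section \<open>Characters of the bundle group\<close>

lemma repS_iff: "repS \<sigma> \<longleftrightarrow> range \<sigma> \<subseteq> SL2"
  by (auto simp: repS_def)

lemma restr_character: "restr (character \<rho>) = character (\<lambda>g. \<rho> (Fib g))"
proof -
  have "eval_word \<rho> (map (\<lambda>(g, e). (Fib g, e)) w) = eval_word (\<lambda>g. \<rho> (Fib g)) w" for w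
    by (induction w) auto
  then show ?thesis
    by (simp add: restr_def character_def fun_eq_iff)
qed

lemma phi_act_character:
  assumes "range \<sigma> \<subseteq> SL2"
  shows "phi_act phi (character \<sigma>) = character (\<lambda>g. eval_word \<sigma> (phi g))"
proof -
  have "\<And>g. invertible (\<sigma> g)"
    using assms SL2_invertible by blast
  then show ?thesis
    by (simp add: phi_act_def character_def fun_eq_iff eval_word_wsubst)
qed

lemma restr_XM_subset_X_phi: "restr ` XM phi \<subseteq> X_phi phi"
proof
  fix ch assume "ch \<in> restr ` XM phi"
  then obtain \<rho> where \<rho>: "repM phi \<rho>" and ch: "ch = character (\<lambda>g. \<rho> (Fib g))"
    by (auto simp: XM_def restr_character)
  define \<tau> where "\<tau> = (\<lambda>g. \<rho> (Fib g))"
  define T where "T = \<rho> Gt"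
  have \<tau>: "range \<tau> \<subseteq> SL2" and T: "invertible T"
    using \<rho> SL2_invertible by (auto simp: repM_def \<tau>_def T_def)
  then have \<tau>_inv: "\<And>g. invertible (\<tau> g)"
    using SL2_invertible by blast
  have "(\<lambda>g. eval_word \<tau> (phi g)) = (\<lambda>g. matrix_inv T ** \<tau> g ** T)"
    using \<rho> by (simp add: repM_def \<tau>_def T_def)
  then have "phi_act phi (character \<tau>) = character \<tau>"
    using \<tau> by (simp add: phi_act_character character_def fun_eq_iff eval_word_conj[OF \<tau>_inv T]
        trace_conj[OF T])
  then show "ch \<in> X_phi phi"
    using \<tau> by (auto simp: X_phi_def XS_def repS_iff ch \<tau>_def)
qed

lemma character_in_restr_XM:
  assumes "range \<tau> \<subseteq> SL2" "T \<in> SL2" "\<And>g. matrix_inv T ** \<tau> g ** T = eval_word \<tau> (phi g)"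
  shows "character \<tau> \<in> restr ` XM phi"
proof -
  define \<rho> where "\<rho> = (\<lambda>x. case x of Gt \<Rightarrow> T | Fib g \<Rightarrow> \<tau> g)"
  have "repM phi \<rho>"
    unfolding repM_def
  proof (intro conjI allI)
    show "\<rho> x \<in> SL2" for x
      using assms by (cases x) (auto simp: \<rho>_def)
    show "matrix_inv (\<rho> Gt) ** \<rho> (Fib g) ** \<rho> Gt = eval_word (\<lambda>x. \<rho> (Fib x)) (phi g)" for g
      using assms(3) by (simp add: \<rho>_def)
  qed
  then have "character \<rho> \<in> XM phi"
    by (auto simp: XM_def)
  moreover have "restr (character \<rho>) = character \<tau>"
    by (simp add: restr_character \<rho>_def)
  ultimately show ?thesis
    by (metis image_eqI)
qed

lemma plus_inverse_eq_iff:
  fixes a b :: "'a::field"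
  assumes "a \<noteq> 0" "b \<noteq> 0"
  shows "a + inverse a = b + inverse b \<longleftrightarrow> a = b \<or> a = inverse b"
proof
  assume "a + inverse a = b + inverse b"
  then have "(a - b) * (a * b - 1) = 0"
    using assms by (simp add: field_simps)
  then have "a - b = 0 \<or> a * b - 1 = 0"
    by simp
  then show "a = b \<or> a = inverse b"
    using assms by (auto simp: field_simps)
qed (use assms in auto)

lemma consistent_inversion:
  fixes a b a' b' :: "'a::field"
  assumes "a \<noteq> 0" "b \<noteq> 0" "a' = a \<or> a' = inverse a" "b' = b \<or> b' = inverse b"
    "a' * b' = a * b \<or> a' * b' = inverse (a * b)"
  shows "(a' = a \<and> b' = b) \<or> (a' = inverse a \<and> b' = inverse b)"
  using assms by (auto simp: field_simps; algebra)

lemma fixed_diag_character_cases: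
  fixes \<kappa> :: "gS \<Rightarrow> complex"
  assumes nz: "\<And>g. \<kappa> g \<noteq> 0"
    and fixed: "phi_act phi (character (diag_rep \<kappa>)) = character (diag_rep \<kappa>)"
  shows "(\<forall>g. eval_scalar \<kappa> (phi g) = \<kappa> g) \<or> (\<forall>g. eval_scalar \<kappa> (phi g) = inverse (\<kappa> g))"
proof -
  have fixed_word: "eval_scalar \<kappa> (wsubst phi w) + inverse (eval_scalar \<kappa> (wsubst phi w))
      = eval_scalar \<kappa> w + inverse (eval_scalar \<kappa> w)" for w
    using fun_cong[OF fixed, of w] by (simp add: phi_act_def character_diag_rep[OF nz])
  have nz_word: "eval_scalar \<kappa> w \<noteq> 0" for w
    by (simp add: eval_scalar_nonzero nz)
  have "eval_scalar \<kappa> (phi g) = \<kappa> g \<or> eval_scalar \<kappa> (phi g) = inverse (\<kappa> g)" for g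
    using fixed_word[of "[(g, False)]"] nz nz_word by (simp add: plus_inverse_eq_iff)
  moreover have "eval_scalar \<kappa> (phi Ga) * eval_scalar \<kappa> (phi Gb) = \<kappa> Ga * \<kappa> Gb \<or>
      eval_scalar \<kappa> (phi Ga) * eval_scalar \<kappa> (phi Gb) = inverse (\<kappa> Ga * \<kappa> Gb)"
    using fixed_word[of "[(Ga, False), (Gb, False)]"] nz nz_word
      plus_inverse_eq_iff[of "eval_scalar \<kappa> (phi Ga) * eval_scalar \<kappa> (phi Gb)" "\<kappa> Ga * \<kappa> Gb"]
    by (simp add: wsubst_pair eval_scalar_append)
  ultimately show ?thesis
    using consistent_inversion[OF nz nz] by (simp add: all_gS)
qed

lemma fixed_diag_character_in_restr_XM:
  fixes \<kappa> :: "gS \<Rightarrow> complex"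
  assumes nz: "\<And>g. \<kappa> g \<noteq> 0"
    and fixed: "phi_act phi (character (diag_rep \<kappa>)) = character (diag_rep \<kappa>)"
  shows "character (diag_rep \<kappa>) \<in> restr ` XM phi"
proof -
  have diag_SL2: "range (diag_rep \<kappa>) \<subseteq> SL2"
    by (auto simp: diag_rep_SL2 nz)
  have phi_diag: "eval_word (diag_rep \<kappa>) (phi g)
      = mat2 (eval_scalar \<kappa> (phi g)) 0 0 (inverse (eval_scalar \<kappa> (phi g)))" for g
    by (rule eval_word_diag_rep[OF nz])
  show ?thesis
    using fixed_diag_character_cases[OF nz fixed]
  proof
    assume "\<forall>g. eval_scalar \<kappa> (phi g) = \<kappa> g"
    then show ?thesis
      by (intro character_in_restr_XM[OF diag_SL2 mat1_SL2]) (simp add: phi_diag diag_rep_def)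
  next
    assume inverted: "\<forall>g. eval_scalar \<kappa> (phi g) = inverse (\<kappa> g)"
    have J: "mat2 0 1 (-1) 0 \<in> SL2" "matrix_inv (mat2 0 1 (-1) 0 :: cmat) = mat2 0 (-1) 1 0"
      by (simp_all add: SL2_iff matrix_inv_mat2)
    \<comment> \<open>conjugation by this rotation swaps the two diagonal entries\<close>
    show ?thesis
      by (intro character_in_restr_XM[OF diag_SL2 J(1)])
        (simp add: J(2) phi_diag inverted diag_rep_def matrix2_eq_iff)
  qed
qed

lemma irreducible_fixed_character_in_restr_XM:
  assumes aut: "is_free_aut phi" and SL2: "range \<sigma> \<subseteq> SL2" and irred: "\<not> reducible \<sigma>"
    and fixed: "phi_act phi (character \<sigma>) = character \<sigma>"
  shows "character \<sigma> \<in> restr ` XM phi"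
proof -
  define \<sigma>' where "\<sigma>' = (\<lambda>g. eval_word \<sigma> (phi g))"
  have inv: "\<And>g. invertible (\<sigma> g)"
    using SL2 SL2_invertible by blast
  have SL2': "range \<sigma>' \<subseteq> SL2"
    using eval_word_SL2[OF SL2] by (auto simp: \<sigma>'_def)
  then have inv': "\<And>g. invertible (\<sigma>' g)"
    using SL2_invertible by blast
  have char': "character \<sigma>' = character \<sigma>"
    using fixed by (simp add: phi_act_character[OF SL2] \<sigma>'_def)
  obtain h where h: "\<And>g. freduce (wsubst phi (h g)) = [(g, False)]"
    using aut unfolding is_free_aut_def by blast
  \<comment> \<open>since \<open>\<phi>\<close> is invertible, \<open>\<sigma>\<close> is recovered from \<open>\<sigma>'\<close> and thus \<open>\<sigma>'\<close> is irreducible too\<close>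
  have "\<sigma> g = eval_word \<sigma>' (h g)" for g
  proof -
    have "\<sigma> g = eval_word \<sigma> (freduce (wsubst phi (h g)))"
      by (simp add: h)
    then show ?thesis
      by (simp add: eval_word_freduce[OF inv] eval_word_wsubst[OF inv] \<sigma>'_def)
  qed
  then have "\<sigma> = (\<lambda>g. eval_word \<sigma>' (h g))" ..
  have "\<not> reducible \<sigma>'"
  proof
    assume "reducible \<sigma>'"
    then have "reducible (\<lambda>g. eval_word \<sigma>' (h g))"
      by (rule reducible_substitution[OF inv'])
    then show False
      using irred \<open>\<sigma> = (\<lambda>g. eval_word \<sigma>' (h g))\<close> by simp
  qed
  then obtain T where "T \<in> SL2" "\<And>g. matrix_inv T ** \<sigma> g ** T = \<sigma>' g"
    using irreducible_reps_conjugate[OF SL2 SL2' irred _ char'] by auto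
  then show ?thesis
    by (intro character_in_restr_XM[OF SL2]) (simp_all add: \<sigma>'_def)
qed

lemma X_phi_subset_restr_XM:
  assumes "is_free_aut phi"
  shows "X_phi phi \<subseteq> restr ` XM phi"
proof
  fix ch assume "ch \<in> X_phi phi"
  then obtain \<sigma> where SL2: "range \<sigma> \<subseteq> SL2" and ch: "ch = character \<sigma>"
    and fixed: "phi_act phi (character \<sigma>) = character \<sigma>"
    by (auto simp: X_phi_def XS_def repS_iff)
  show "ch \<in> restr ` XM phi"
  proof (cases "reducible \<sigma>")
    case True
    then obtain \<kappa> where "\<And>g. \<kappa> g \<noteq> 0" "character \<sigma> = character (diag_rep \<kappa>)"
      using reducible_character_diag_rep SL2 by blast
    then show ?thesis
      using fixed_diag_character_in_restr_XM fixed ch by simp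
  next
    case False
    then show ?thesis
      using irreducible_fixed_character_in_restr_XM assms SL2 fixed ch by blast
  qed
qed

section \<open>Finiteness of the fixed reducible characters\<close>

lemma esum_Cons: "esum h ((g, e) # w) = (if g = h then (if e then -1 else 1) else 0) + esum h w"
  by (simp add: esum_def)

lemma eval_scalar_esum:
  fixes \<kappa> :: "gS \<Rightarrow> 'a::field"
  assumes "\<And>g. \<kappa> g \<noteq> 0"
  shows "eval_scalar \<kappa> w = \<kappa> Ga powi esum Ga w * \<kappa> Gb powi esum Gb w"
proof (induction w)
  case Nil
  then show ?case
    by (simp add: esum_def)
next
  case (Cons x w)
  obtain g e where x: "x = (g, e)"
    by force
  show ?case
    using Cons assms by (cases g; cases e) (auto simp: x esum_Cons power_int_add power_int_diff field_simps)
qed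

lemma powi_cramer:
  fixes x y :: "'a::field"
  assumes "x \<noteq> 0" "y \<noteq> 0" "x powi p * y powi q = 1" "x powi r * y powi s = 1"
  shows "x powi (p * s - q * r) = 1" "y powi (p * s - q * r) = 1"
proof -
  have "x powi (p * s) * y powi (q * s) = 1" "x powi (r * q) * y powi (s * q) = 1"
    "x powi (p * r) * y powi (q * r) = 1" "x powi (r * p) * y powi (s * p) = 1"
    using assms(3,4)[THEN arg_cong, of "\<lambda>z. z powi s"] assms(3,4)[THEN arg_cong, of "\<lambda>z. z powi q"]
      assms(3,4)[THEN arg_cong, of "\<lambda>z. z powi r"] assms(3,4)[THEN arg_cong, of "\<lambda>z. z powi p"]
    by (simp_all add: power_int_mult_distrib power_int_mult)
  then have "x powi (p * s) = x powi (q * r)" "y powi (p * s) = y powi (q * r)"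
    using assms(1,2) by (simp_all add: mult.commute) (metis mult.commute mult_right_cancel power_int_eq_0_iff)+
  then show "x powi (p * s - q * r) = 1" "y powi (p * s - q * r) = 1"
    using assms(1,2) by (simp_all add: power_int_diff)
qed

text \<open>If \<open>\<kappa> \<circ> \<phi> = \<kappa>\<^sup>e\<close> on the generators, then in additive notation \<open>(\<phi>\<^sub>* - e) log \<kappa> = 0\<close>, so
  the eigenvalues are killed by \<open>det (\<phi>\<^sub>* - e) = det \<phi>\<^sub>* - e tr \<phi>\<^sub>* + e\<^sup>2\<close>.\<close>

lemma eigenvalue_powi_eq_1:
  fixes \<kappa> :: "gS \<Rightarrow> 'a::field"
  assumes nz: "\<And>g. \<kappa> g \<noteq> 0" and det: "hom_det phi = 1"
    and fixed: "\<And>g. eval_scalar \<kappa> (phi g) = \<kappa> g powi e"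
  shows "\<kappa> g powi (1 - e * hom_trace phi + e\<^sup>2) = 1"
proof -
  define a b where "a = \<kappa> Ga" and "b = \<kappa> Gb"
  have "a \<noteq> 0" "b \<noteq> 0"
    by (simp_all add: a_def b_def nz)
  have "a powi hom_matrix phi Ga Ga * b powi hom_matrix phi Gb Ga = a powi e"
    "a powi hom_matrix phi Ga Gb * b powi hom_matrix phi Gb Gb = b powi e"
    using fixed[of Ga] fixed[of Gb]
    by (simp_all add: eval_scalar_esum[OF nz] hom_matrix_def a_def b_def)
  then have "a powi (hom_matrix phi Ga Ga - e) * b powi hom_matrix phi Gb Ga = 1"
    "a powi hom_matrix phi Ga Gb * b powi (hom_matrix phi Gb Gb - e) = 1"
    using \<open>a \<noteq> 0\<close> \<open>b \<noteq> 0\<close> by (simp_all add: power_int_diff field_simps)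
  moreover have "(hom_matrix phi Ga Ga - e) * (hom_matrix phi Gb Gb - e)
      - hom_matrix phi Gb Ga * hom_matrix phi Ga Gb = 1 - e * hom_trace phi + e\<^sup>2"
    using det by (simp add: hom_det_def hom_trace_def algebra_simps power2_eq_square)
  ultimately have "a powi (1 - e * hom_trace phi + e\<^sup>2) = 1" "b powi (1 - e * hom_trace phi + e\<^sup>2) = 1"
    using powi_cramer[OF \<open>a \<noteq> 0\<close> \<open>b \<noteq> 0\<close>] by metis+
  then show ?thesis
    by (cases g) (simp_all add: a_def b_def)
qed

lemma power_nat_abs_eq_1:
  fixes x :: "'a::field"
  assumes "x powi n = 1"
  shows "x ^ nat \<bar>n\<bar> = 1"
proof (cases "n \<ge> 0")
  case True
  then show ?thesis
    using assms by (simp add: power_int_def)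
next
  case False
  then show ?thesis
    using assms by (simp add: power_int_def power_inverse inverse_eq_1_iff)
qed

lemma fixed_diag_character_roots_of_unity:
  fixes \<kappa> :: "gS \<Rightarrow> complex"
  assumes nz: "\<And>g. \<kappa> g \<noteq> 0" and det: "hom_det phi = 1"
    and fixed: "phi_act phi (character (diag_rep \<kappa>)) = character (diag_rep \<kappa>)"
  shows "\<kappa> g ^ nat \<bar>4 - (hom_trace phi)\<^sup>2\<bar> = 1"
proof -
  define t where "t = hom_trace phi"
  consider "\<And>g. eval_scalar \<kappa> (phi g) = \<kappa> g powi 1" | "\<And>g. eval_scalar \<kappa> (phi g) = \<kappa> g powi -1"
    using fixed_diag_character_cases[of \<kappa>] nz fixed by (auto simp: power_int_minus)
  then have "\<kappa> g powi ((2 - t) * (2 + t)) = 1"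
  proof cases
    case 1
    then show ?thesis
      using eigenvalue_powi_eq_1[of \<kappa>, OF nz det 1, of g] by (simp add: t_def power_int_mult)
  next
    case 2
    then show ?thesis
      using eigenvalue_powi_eq_1[of \<kappa>, OF nz det 2, of g]
      by (simp add: t_def mult.commute[of "2 - _"] power_int_mult)
  qed
  then show ?thesis
    using power_nat_abs_eq_1[of "\<kappa> g"] by (simp add: t_def algebra_simps power2_eq_square)
qed

lemma finite_reducible_X_phi:
  assumes det: "hom_det phi = 1" and trace: "\<bar>hom_trace phi\<bar> > 2"
  shows "finite {ch \<in> X_phi phi. \<exists>\<sigma>. repS \<sigma> \<and> reducible \<sigma> \<and> ch = character \<sigma>}"
proof -
  define n where "n = nat \<bar>4 - (hom_trace phi)\<^sup>2\<bar>"
  have "2 * 2 < \<bar>hom_trace phi\<bar> * \<bar>hom_trace phi\<bar>"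
    using trace by (intro mult_strict_mono) auto
  then have "n \<ge> 1"
    by (simp add: n_def power2_eq_square)
  define R where "R = {z :: complex. z ^ n = 1}"
  have "finite {\<kappa> :: gS \<Rightarrow> complex. \<forall>g. \<kappa> g \<in> R}"
  proof (rule finite_subset)
    show "{\<kappa>. \<forall>g. \<kappa> g \<in> R} \<subseteq> (\<Pi>\<^sub>E (g::gS) \<in> UNIV. R)"
      by (auto simp: PiE_UNIV_domain)
    show "finite (\<Pi>\<^sub>E (g::gS) \<in> UNIV. R)"
      using finite_roots_unity[OF \<open>n \<ge> 1\<close>] unfolding UNIV_gS R_def by (intro finite_PiE) simp_all
  qed
  moreover have "{ch \<in> X_phi phi. \<exists>\<sigma>. repS \<sigma> \<and> reducible \<sigma> \<and> ch = character \<sigma>}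
      \<subseteq> (\<lambda>\<kappa>. character (diag_rep \<kappa>)) ` {\<kappa>. \<forall>g. \<kappa> g \<in> R}"
  proof
    fix ch assume "ch \<in> {ch \<in> X_phi phi. \<exists>\<sigma>. repS \<sigma> \<and> reducible \<sigma> \<and> ch = character \<sigma>}"
    then obtain \<sigma> where "ch \<in> X_phi phi" "range \<sigma> \<subseteq> SL2" "reducible \<sigma>" "ch = character \<sigma>"
      by (auto simp: repS_iff)
    then obtain \<kappa> where nz: "\<And>g. \<kappa> g \<noteq> 0" and ch: "ch = character (diag_rep \<kappa>)"
      by (metis reducible_character_diag_rep)
    then have "phi_act phi (character (diag_rep \<kappa>)) = character (diag_rep \<kappa>)"
      using \<open>ch \<in> X_phi phi\<close> by (simp add: X_phi_def)
    then have "\<kappa> g \<in> R" for g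
      using fixed_diag_character_roots_of_unity[of \<kappa>] nz det by (simp add: R_def n_def)
    then show "ch \<in> (\<lambda>\<kappa>. character (diag_rep \<kappa>)) ` {\<kappa>. \<forall>g. \<kappa> g \<in> R}"
      using ch by blast
  qed
  ultimately show ?thesis
    by (meson finite_imageI finite_subset)
qed

theorem lemma3p1:
  fixes phi :: "gS \<Rightarrow> gS word"
  assumes "is_free_aut phi"
    and "hom_det phi = 1"
    and "\<bar>hom_trace phi\<bar> > 2"
  shows "restr ` XM phi = X_phi phi \<and>
         finite {ch \<in> X_phi phi. \<exists>\<sigma>. repS \<sigma> \<and> reducible \<sigma> \<and> ch = character \<sigma>}"
proof
  show "restr ` XM phi = X_phi phi"
    using restr_XM_subset_X_phi X_phi_subset_restr_XM[OF assms(1)] by (rule subset_antisym)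
  show "finite {ch \<in> X_phi phi. \<exists>\<sigma>. repS \<sigma> \<and> reducible \<sigma> \<and> ch = character \<sigma>}"
    using assms(2,3) by (rule finite_reducible_X_phi)
qed

end
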